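(* Let $T=(V,E)$ be a tree with labeled leaves $1,\dots,n$, let $(\theta_e)_{e\in E}$ be edge weights in $[-1,1]$, and let $\theta'$ be a weight vector that differs from $\theta$ only on one edge $e'$. Then $\mathrm{TV}(\Pr_{T,\theta}[x],\Pr_{T,\theta'}[x])\le|\theta'_{e'}-\theta_{e'}|/2$.
   Context: For a tree $T$ with edge weights $\theta_e\in[-1,1]$, the Ising model assigns spins $x_v\in\{-1,1\}$ to all nodes with probability $\propto\prod_{(u,v)\in E}\frac{1+\theta_{uv}x_ux_v}{2}$; $\Pr_{T,\theta}[x]$ denotes the induced marginal distribution of the spins $x=(x_1,\dots,x_n)$ of the leaves. $\mathrm{TV}(\mu,\nu)=\frac12\sum_x|\mu(x)-\nu(x)|$. *)

theory Defs
  imports "HOL-Analysis.Analysis"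
begin

definition simple_graph :: "'v set \<Rightarrow> 'v set set \<Rightarrow> bool" where
  "simple_graph V E \<longleftrightarrow> finite V \<and> (\<forall>e\<in>E. \<exists>u v. u \<in> V \<and> v \<in> V \<and> u \<noteq> v \<and> e = {u, v})"

definition adj :: "'v set set \<Rightarrow> 'v \<Rightarrow> 'v \<Rightarrow> bool" where
  "adj E u v \<longleftrightarrow> u \<noteq> v \<and> {u, v} \<in> E"

definition connected_graph :: "'v set \<Rightarrow> 'v set set \<Rightarrow> bool" where
  "connected_graph V E \<longleftrightarrow> V \<noteq> {} \<and>
     (\<forall>u\<in>V. \<forall>v\<in>V. (u, v) \<in> {(a, b). adj E a b}\<^sup>*)"

definition is_cycle :: "'v set set \<Rightarrow> 'v list \<Rightarrow> bool" where
  "is_cycle E cs \<longleftrightarrow> length cs \<ge> 3 \<and> distinct cs \<and>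
     (\<forall>i. Suc i < length cs \<longrightarrow> adj E (cs ! i) (cs ! Suc i)) \<and>
     adj E (last cs) (hd cs)"

definition is_tree :: "'v set \<Rightarrow> 'v set set \<Rightarrow> bool" where
  "is_tree V E \<longleftrightarrow> simple_graph V E \<and> connected_graph V E \<and> \<not> (\<exists>cs. is_cycle E cs)"

definition leaves :: "'v set \<Rightarrow> 'v set set \<Rightarrow> 'v set" where
  "leaves V E = {v \<in> V. card {e \<in> E. v \<in> e} = 1}"

text \<open>Spin configurations on all vertices (fixed to 1 outside V, so the set is finite).\<close>
definition spin_configs :: "'v set \<Rightarrow> ('v \<Rightarrow> real) set" where
  "spin_configs V = {s. (\<forall>v\<in>V. s v = 1 \<or> s v = -1) \<and> (\<forall>v. v \<notin> V \<longrightarrow> s v = 1)}"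

definition ising_weight :: "'v set set \<Rightarrow> ('v set \<Rightarrow> real) \<Rightarrow> ('v \<Rightarrow> real) \<Rightarrow> real" where
  "ising_weight E \<theta> s = (\<Prod>e\<in>E. (1 + \<theta> e * (\<Prod>v\<in>e. s v)) / 2)"

definition partition_fn :: "'v set \<Rightarrow> 'v set set \<Rightarrow> ('v set \<Rightarrow> real) \<Rightarrow> real" where
  "partition_fn V E \<theta> = (\<Sum>s\<in>spin_configs V. ising_weight E \<theta> s)"

definition leaf_configs :: "nat \<Rightarrow> (nat \<Rightarrow> real) set" where
  "leaf_configs n = {x. (\<forall>i\<in>{1..n}. x i = 1 \<or> x i = -1) \<and> (\<forall>i. i \<notin> {1..n} \<longrightarrow> x i = 1)}"

definition leaf_marginal ::
  "'v set \<Rightarrow> 'v set set \<Rightarrow> nat \<Rightarrow> (nat \<Rightarrow> 'v) \<Rightarrow> ('v set \<Rightarrow> real) \<Rightarrow> (nat \<Rightarrow> real) \<Rightarrow> real" where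
  "leaf_marginal V E n lab \<theta> x =
     (\<Sum>s\<in>{s \<in> spin_configs V. \<forall>i\<in>{1..n}. s (lab i) = x i}. ising_weight E \<theta> s)
       / partition_fn V E \<theta>"

definition tv_leaf ::
  "'v set \<Rightarrow> 'v set set \<Rightarrow> nat \<Rightarrow> (nat \<Rightarrow> 'v) \<Rightarrow> ('v set \<Rightarrow> real) \<Rightarrow> ('v set \<Rightarrow> real) \<Rightarrow> real" where
  "tv_leaf V E n lab \<theta> \<theta>' =
     (1/2) * (\<Sum>x\<in>leaf_configs n. \<bar>leaf_marginal V E n lab \<theta> x - leaf_marginal V E n lab \<theta>' x\<bar>)"

end

theory Submission
  imports Defs "HOL-Library.Transitive_Closure_Table"
begin

text \<open>Every edge e' = {u, v} of a tree is a bridge: the vertices C on u's side of it form a cut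
  crossed by no other edge. Flipping all spins in C fixes the factor of every other edge and
  negates the spin product s u * s v, so the odd part of the weight in \<theta> e' sums to zero and
  the partition function equals half that of the forest T - e', whatever \<theta> e' is. Hence both
  models share the normaliser Z; pointwise the weights differ by |\<theta>' e' - \<theta> e'| / 2 times the
  weight of T - e', which sums to |\<theta>' e' - \<theta> e'| Z, and passing to the leaf marginals can only
  decrease the L1 distance.\<close>

lemma finite_spin_configs: "finite V \<Longrightarrow> finite (spin_configs V)"
  using finite_set_of_finite_funs[of V "{1, -1}" 1]
  by (rule finite_subset[rotated]) (auto simp: spin_configs_def)

lemma finite_leaf_configs: "finite (leaf_configs n)"
  using finite_set_of_finite_funs[of "{1..n}" "{1, -1}" 1]
  by (rule finite_subset[rotated]) (auto simp: leaf_configs_def)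

lemma tree_edge_cut:
  assumes tree: "is_tree V E" and uv: "{u, v} \<in> E" "u \<noteq> v"
  obtains C where "C \<subseteq> V" "u \<in> C" "v \<notin> C" "\<forall>e\<in>E - {{u, v}}. e \<subseteq> C \<or> e \<inter> C = {}"
proof
  have sg: "simple_graph V E" using tree by (simp add: is_tree_def)
  then have "u \<in> V" using uv by (force simp: simple_graph_def doubleton_eq_iff)
  define r where "r = adj (E - {{u, v}})"
  define C where "C = {w \<in> V. r\<^sup>*\<^sup>* u w}"
  show "C \<subseteq> V" by (simp add: C_def)
  show "u \<in> C" using \<open>u \<in> V\<close> by (simp add: C_def)
  show "v \<notin> C"
  proof
    assume "v \<in> C"
    then obtain xs where "rtrancl_path r u xs v" by (auto simp: C_def rtranclp_eq_rtrancl_path)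
    then obtain ys where path: "rtrancl_path r u ys v" and dist: "distinct (u # ys)"
      by (rule rtrancl_path_distinct)
    have "ys \<noteq> []" using path uv(2) by (auto elim: rtrancl_path.cases)
    then have last: "last (u # ys) = v" using path by (simp add: rtrancl_path_last)
    have "ys \<noteq> [v]" using path by (auto simp: r_def adj_def elim!: rtrancl_path.cases)
    \<comment> \<open>a path from u to v avoiding the edge {u, v} closes a cycle with it\<close>
    have "is_cycle E (u # ys)"
      unfolding is_cycle_def
    proof (intro conjI allI impI)
      show "3 \<le> length (u # ys)"
        using \<open>ys \<noteq> []\<close> \<open>ys \<noteq> [v]\<close> last by (cases ys rule: remdups_adj.cases) auto
      show "distinct (u # ys)" by (fact dist)
      show "adj E (last (u # ys)) (hd (u # ys))"
        using last uv by (auto simp: adj_def insert_commute)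
    next
      fix i assume "Suc i < length (u # ys)"
      then have "r ((u # ys) ! i) (ys ! i)" using path by (simp add: rtrancl_path_nth)
      then show "adj E ((u # ys) ! i) ((u # ys) ! Suc i)" by (simp add: r_def adj_def)
    qed
    with tree show False by (auto simp: is_tree_def)
  qed
  show "\<forall>e\<in>E - {{u, v}}. e \<subseteq> C \<or> e \<inter> C = {}"
  proof
    fix e assume e: "e \<in> E - {{u, v}}"
    then obtain a b where ab: "a \<in> V" "b \<in> V" "a \<noteq> b" "e = {a, b}"
      using sg e unfolding simple_graph_def by blast
    then have "r a b" "r b a" using e by (auto simp: r_def adj_def insert_commute)
    then have "a \<in> C \<longleftrightarrow> b \<in> C"
      using ab by (auto simp: C_def intro: rtranclp.rtrancl_into_rtrancl)
    then show "e \<subseteq> C \<or> e \<inter> C = {}" using ab by auto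
  qed
qed

lemma simple_graph_Diff: "simple_graph V E \<Longrightarrow> simple_graph V (E - F)"
  by (auto simp: simple_graph_def)

lemma simple_graph_finite_edges:
  assumes "simple_graph V E"
  shows "finite E"
proof -
  have "E \<subseteq> Pow V" using assms by (auto simp: simple_graph_def)
  moreover have "finite V" using assms by (simp add: simple_graph_def)
  ultimately show ?thesis by (rule finite_subset[OF _ finite_Pow_iff[THEN iffD2]])
qed

lemma edge_spin_pm_one:
  assumes "simple_graph V E" "e \<in> E" "s \<in> spin_configs V"
  shows "(\<Prod>w\<in>e. s w) = 1 \<or> (\<Prod>w\<in>e. s w) = -1"
proof -
  obtain a b where "a \<in> V" "b \<in> V" "a \<noteq> b" "e = {a, b}"
    using assms(1,2) unfolding simple_graph_def by blast
  moreover have "s a = 1 \<or> s a = -1" "s b = 1 \<or> s b = -1"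
    using assms(3) \<open>a \<in> V\<close> \<open>b \<in> V\<close> by (auto simp: spin_configs_def)
  ultimately show ?thesis by auto
qed

lemma ising_weight_nonneg:
  assumes "simple_graph V E" "\<forall>e\<in>E. \<theta> e \<in> {-1..1}" "s \<in> spin_configs V"
  shows "0 \<le> ising_weight E \<theta> s"
  unfolding ising_weight_def
proof (rule prod_nonneg)
  fix e assume "e \<in> E"
  then show "0 \<le> (1 + \<theta> e * (\<Prod>w\<in>e. s w)) / 2"
    using assms edge_spin_pm_one[OF assms(1) _ assms(3)] by fastforce
qed

lemma ising_weight_remove_edge:
  assumes "finite E" "e' \<in> E"
  shows "ising_weight E \<theta> s = (1 + \<theta> e' * (\<Prod>w\<in>e'. s w)) / 2 * ising_weight (E - {e'}) \<theta> s"
  unfolding ising_weight_def using assms by (rule prod.remove)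

lemma ising_weight_cong: "\<forall>e\<in>E. \<theta>' e = \<theta> e \<Longrightarrow> ising_weight E \<theta>' = ising_weight E \<theta>"
  unfolding ising_weight_def by (intro ext prod.cong) auto

definition flip_spins :: "'v set \<Rightarrow> ('v \<Rightarrow> real) \<Rightarrow> 'v \<Rightarrow> real" where
  "flip_spins C s w = (if w \<in> C then - s w else s w)"

lemma flip_spins_flip_spins [simp]: "flip_spins C (flip_spins C s) = s"
  by (auto simp: flip_spins_def)

lemma flip_spins_in_spin_configs:
  "C \<subseteq> V \<Longrightarrow> s \<in> spin_configs V \<Longrightarrow> flip_spins C s \<in> spin_configs V"
  by (auto simp: flip_spins_def spin_configs_def)

lemma ising_weight_flip_spins:
  assumes "simple_graph V E" "\<forall>e\<in>E. e \<subseteq> C \<or> e \<inter> C = {}"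
  shows "ising_weight E \<theta> (flip_spins C s) = ising_weight E \<theta> s"
  unfolding ising_weight_def
proof (rule prod.cong[OF refl])
  fix e assume "e \<in> E"
  then obtain a b where ab: "a \<noteq> b" "e = {a, b}"
    using assms(1) unfolding simple_graph_def by blast
  moreover have "e \<subseteq> C \<or> e \<inter> C = {}" using assms(2) \<open>e \<in> E\<close> by blast
  ultimately have "a \<in> C \<longleftrightarrow> b \<in> C" by auto
  then have "(\<Prod>w\<in>e. flip_spins C s w) = (\<Prod>w\<in>e. s w)"
    using ab by (cases "a \<in> C") (simp_all add: flip_spins_def)
  then show "(1 + \<theta> e * (\<Prod>w\<in>e. flip_spins C s w)) / 2 = (1 + \<theta> e * (\<Prod>w\<in>e. s w)) / 2"
    by simp
qed

lemma partition_fn_remove_cut_edge: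
  assumes sg: "simple_graph V E" and uv: "{u, v} \<in> E"
    and C: "C \<subseteq> V" "u \<in> C" "v \<notin> C" "\<forall>e\<in>E - {{u, v}}. e \<subseteq> C \<or> e \<inter> C = {}"
  shows "partition_fn V E \<theta> = partition_fn V (E - {{u, v}}) \<theta> / 2"
proof -
  define S where "S = spin_configs V"
  define R where "R = ising_weight (E - {{u, v}}) \<theta>"
  have "u \<noteq> v" using C by auto
  have R_flip: "R (flip_spins C s) = R s" for s
    unfolding R_def using simple_graph_Diff[OF sg] C(4) by (rule ising_weight_flip_spins)
  have spin_uv_flip: "(\<Prod>w\<in>{u, v}. flip_spins C s w) = - (\<Prod>w\<in>{u, v}. s w)" for s
    using C \<open>u \<noteq> v\<close> by (simp add: flip_spins_def)
  have odd_part: "(\<Sum>s\<in>S. R s * (\<Prod>w\<in>{u, v}. s w)) = 0"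
  proof -
    have "(\<Sum>s\<in>S. R s * (\<Prod>w\<in>{u, v}. s w))
        = (\<Sum>s\<in>S. R (flip_spins C s) * (\<Prod>w\<in>{u, v}. flip_spins C s w))"
      by (rule sum.reindex_bij_witness[where i = "flip_spins C" and j = "flip_spins C"])
        (auto simp: S_def flip_spins_in_spin_configs C(1))
    also have "\<dots> = - (\<Sum>s\<in>S. R s * (\<Prod>w\<in>{u, v}. s w))"
      by (simp add: R_flip spin_uv_flip sum_negf)
    finally show ?thesis by simp
  qed
  have "partition_fn V E \<theta> = (\<Sum>s\<in>S. R s / 2 + \<theta> {u, v} / 2 * (R s * (\<Prod>w\<in>{u, v}. s w)))"
    unfolding partition_fn_def S_def R_def
    using ising_weight_remove_edge[OF simple_graph_finite_edges[OF sg] uv]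
    by (intro sum.cong) (auto simp: field_simps)
  also have "\<dots> = (\<Sum>s\<in>S. R s) / 2 + \<theta> {u, v} / 2 * (\<Sum>s\<in>S. R s * (\<Prod>w\<in>{u, v}. s w))"
    by (simp add: sum.distrib sum_divide_distrib sum_distrib_left)
  also have "\<dots> = (\<Sum>s\<in>S. R s) / 2"
    by (simp add: odd_part)
  finally show ?thesis by (simp add: partition_fn_def S_def R_def)
qed

lemma abs_ising_weight_diff_single_edge:
  assumes sg: "simple_graph V E" and "e' \<in> E" and "\<forall>e\<in>E. \<theta> e \<in> {-1..1}"
    and "\<forall>e\<in>E. e \<noteq> e' \<longrightarrow> \<theta>' e = \<theta> e" and s: "s \<in> spin_configs V"
  shows "\<bar>ising_weight E \<theta> s - ising_weight E \<theta>' s\<bar>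
    = \<bar>\<theta>' e' - \<theta> e'\<bar> / 2 * ising_weight (E - {e'}) \<theta> s"
proof -
  let ?P = "\<Prod>w\<in>e'. s w" and ?R = "ising_weight (E - {e'}) \<theta> s"
  have "ising_weight (E - {e'}) \<theta>' = ising_weight (E - {e'}) \<theta>"
    using assms(4) by (intro ising_weight_cong) auto
  then have diff: "ising_weight E \<theta> s - ising_weight E \<theta>' s = (\<theta> e' - \<theta>' e') * ?P / 2 * ?R"
    using ising_weight_remove_edge[OF simple_graph_finite_edges[OF sg] \<open>e' \<in> E\<close>]
    by (simp add: field_simps)
  have "\<bar>ising_weight E \<theta> s - ising_weight E \<theta>' s\<bar> = \<bar>\<theta>' e' - \<theta> e'\<bar> * \<bar>?P\<bar> / 2 * \<bar>?R\<bar>"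
    unfolding diff by (simp add: abs_mult abs_minus_commute)
  moreover have "\<bar>?P\<bar> = 1" using edge_spin_pm_one[OF sg \<open>e' \<in> E\<close> s] by auto
  moreover have "0 \<le> ?R"
    using ising_weight_nonneg[OF simple_graph_Diff[OF sg] _ s] assms(3) by auto
  ultimately show ?thesis by simp
qed

lemma sum_abs_fibers_le:
  fixes f :: "'a \<Rightarrow> real"
  assumes "finite S" "finite L" "g ` S \<subseteq> L"
  shows "(\<Sum>x\<in>L. \<bar>\<Sum>s\<in>{s \<in> S. g s = x}. f s\<bar>) \<le> (\<Sum>s\<in>S. \<bar>f s\<bar>)"
proof -
  have "(\<Sum>x\<in>L. \<bar>\<Sum>s\<in>{s \<in> S. g s = x}. f s\<bar>) \<le> (\<Sum>x\<in>L. \<Sum>s\<in>{s \<in> S. g s = x}. \<bar>f s\<bar>)"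
    by (intro sum_mono sum_abs)
  also have "\<dots> = (\<Sum>s\<in>S. \<bar>f s\<bar>)"
    using assms by (rule sum.group)
  finally show ?thesis .
qed

lemma tv_leaf_le_sum_abs_diff:
  fixes lab :: "nat \<Rightarrow> 'v"
  assumes "finite V" and Z: "partition_fn V E \<theta>' = partition_fn V E \<theta>"
  shows "tv_leaf V E n lab \<theta> \<theta>'
    \<le> (\<Sum>s\<in>spin_configs V. \<bar>ising_weight E \<theta> s - ising_weight E \<theta>' s\<bar>)
        / (2 * \<bar>partition_fn V E \<theta>\<bar>)"
proof -
  define S where "S = spin_configs V"
  define g where "g s = (\<lambda>i. if i \<in> {1..n} then s (lab i) else 1)" for s :: "'v \<Rightarrow> real"
  let ?D = "\<lambda>s. ising_weight E \<theta> s - ising_weight E \<theta>' s"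
  let ?Z = "partition_fn V E \<theta>"
  have g_leaf: "g ` S \<subseteq> leaf_configs n"
    by (auto simp: g_def S_def spin_configs_def leaf_configs_def)
  have marginal_diff: "\<bar>leaf_marginal V E n lab \<theta> x - leaf_marginal V E n lab \<theta>' x\<bar>
      = \<bar>\<Sum>s\<in>{s \<in> S. g s = x}. ?D s\<bar> / \<bar>?Z\<bar>" if "x \<in> leaf_configs n" for x
  proof -
    have "{s \<in> spin_configs V. \<forall>i\<in>{1..n}. s (lab i) = x i} = {s \<in> S. g s = x}"
      using that by (auto simp: S_def g_def leaf_configs_def fun_eq_iff)
    then have "leaf_marginal V E n lab \<theta> x - leaf_marginal V E n lab \<theta>' x
        = (\<Sum>s\<in>{s \<in> S. g s = x}. ?D s) / ?Z"
      unfolding leaf_marginal_def Z by (simp add: sum_subtractf diff_divide_distrib)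
    then show ?thesis by simp
  qed
  have "tv_leaf V E n lab \<theta> \<theta>'
      = 1 / 2 * (\<Sum>x\<in>leaf_configs n. \<bar>\<Sum>s\<in>{s \<in> S. g s = x}. ?D s\<bar> / \<bar>?Z\<bar>)"
    unfolding tv_leaf_def using marginal_diff by (intro arg_cong2[where f = "(*)"] sum.cong) auto
  also have "\<dots> = (\<Sum>x\<in>leaf_configs n. \<bar>\<Sum>s\<in>{s \<in> S. g s = x}. ?D s\<bar>) / (2 * \<bar>?Z\<bar>)"
    by (simp add: sum_divide_distrib ac_simps)
  also have "\<dots> \<le> (\<Sum>s\<in>S. \<bar>?D s\<bar>) / (2 * \<bar>?Z\<bar>)"
    using finite_spin_configs[OF assms(1)] finite_leaf_configs g_leaf
    by (intro divide_right_mono sum_abs_fibers_le) (auto simp: S_def)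
  finally show ?thesis by (simp add: S_def)
qed

theorem lemma12:
  fixes V :: "'v set" and E :: "'v set set" and n :: nat and lab :: "nat \<Rightarrow> 'v"
    and \<theta> \<theta>' :: "'v set \<Rightarrow> real" and e' :: "'v set"
  assumes "is_tree V E"
    and "bij_betw lab {1..n} (leaves V E)"
    and "\<forall>e\<in>E. \<theta> e \<in> {-1..1}"
    and "\<forall>e\<in>E. \<theta>' e \<in> {-1..1}"
    and "e' \<in> E"
    and "\<forall>e\<in>E. e \<noteq> e' \<longrightarrow> \<theta>' e = \<theta> e"
  shows "tv_leaf V E n lab \<theta> \<theta>' \<le> \<bar>\<theta>' e' - \<theta> e'\<bar> / 2"
proof -
  have sg: "simple_graph V E" using assms(1) by (simp add: is_tree_def)
  then obtain u v where e'_eq: "e' = {u, v}" and "u \<noteq> v"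
    using assms(5) unfolding simple_graph_def by blast
  with assms(5) have uv: "{u, v} \<in> E" "u \<noteq> v" by simp_all
  obtain C where C: "C \<subseteq> V" "u \<in> C" "v \<notin> C" "\<forall>e\<in>E - {{u, v}}. e \<subseteq> C \<or> e \<inter> C = {}"
    using tree_edge_cut[OF assms(1) uv] .
  have Z_remove: "partition_fn V E \<phi> = partition_fn V (E - {e'}) \<phi> / 2" for \<phi>
    unfolding e'_eq using sg uv(1) C by (rule partition_fn_remove_cut_edge)
  let ?Z = "partition_fn V E \<theta>" and ?\<Delta> = "\<bar>\<theta>' e' - \<theta> e'\<bar>"
  have "ising_weight (E - {e'}) \<theta>' = ising_weight (E - {e'}) \<theta>"
    using assms(6) by (intro ising_weight_cong) auto
  then have "partition_fn V E \<theta>' = ?Z"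
    unfolding Z_remove by (simp add: partition_fn_def)
  then have "tv_leaf V E n lab \<theta> \<theta>'
      \<le> (\<Sum>s\<in>spin_configs V. \<bar>ising_weight E \<theta> s - ising_weight E \<theta>' s\<bar>) / (2 * \<bar>?Z\<bar>)"
    using sg by (intro tv_leaf_le_sum_abs_diff) (auto simp: simple_graph_def)
  also have "(\<Sum>s\<in>spin_configs V. \<bar>ising_weight E \<theta> s - ising_weight E \<theta>' s\<bar>)
      = (\<Sum>s\<in>spin_configs V. ?\<Delta> / 2 * ising_weight (E - {e'}) \<theta> s)"
    using abs_ising_weight_diff_single_edge[OF sg assms(5,3,6)] by (rule sum.cong[OF refl])
  also have "\<dots> = ?\<Delta> * ?Z"
    unfolding Z_remove by (simp add: partition_fn_def sum_distrib_left sum_divide_distrib)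
  also have "?\<Delta> * ?Z / (2 * \<bar>?Z\<bar>) \<le> ?\<Delta> / 2"
    by (cases "?Z = 0") (auto simp: abs_if)
  finally show ?thesis .
qed

end
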